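(* Let $\Gamma:\Delta\to\mathbb{R}_+$ be a completely monotone double kernel (see context) whose measure $\mu$ satisfies $0<\mu(\mathbb{R})<+\infty$, extended to the diagonal by $\Gamma(t,t)=\mu(\mathbb{R})$. Then $\Gamma$ preserves nonnegativity.
   Context: $\Delta=\{(t,s)\in\mathbb{R}_+^2:s\le t\}$, $\mathring\Delta=\{(t,s):0<s<t\}$. A function $\Gamma:\mathring\Delta\to\mathbb{R}_+$ is a completely monotone double kernel if there exist a Borel measure $\mu$ on $\mathbb{R}$ finite on compact sets and a family $(\rho(\alpha,\cdot))_{\alpha\in\mathbb{R}}$ of Borel measures on $\mathbb{R}_+$, finite on compact sets, such that $\rho(\beta,\cdot)-\rho(\alpha,\cdot)$ is a nonnegative measure whenever $\alpha\le\beta$, with either $\Gamma(t,s)=\int_{\mathbb{R}}e^{-\rho(\alpha,(s,t])}\mu(\mathrm{d}\alpha)$ for all $(t,s)\in\mathring\Delta$, or $\Gamma(t,s)=\int_{\mathbb{R}}e^{-\rho(\alpha,[s,t))}\mu(\mathrm{d}\alpha)$ for all $(t,s)\in\mathring\Delta$, and $\Gamma(t,s)<\infty$ for $t>s$. A kernel $\Gamma:\Delta\to\mathbb{R}_+$ preserves nonnegativity if for every $T>0$, every $K\in\mathbb{N}^*$, $x_1,\dots,x_K\in\mathbb{R}$ and $0\le t_1<\dots<t_K<T$ with $\sum_{k'=1}^kx_{k'}\Gamma(t_k,t_{k'})\ge0$ for all $k\in\{1,\dots,K\}$, one has $\sum_{k:t_k\le t}x_k\Gamma(t,t_k)\ge0$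 for all $t\in[0,T]$. *)

theory Defs
  imports "HOL-Analysis.Analysis"
begin

text \<open>Kernels are functions \<open>\<Gamma> t s\<close>, intended on \<open>\<Delta> = {(t,s). 0 \<le> s \<and> s \<le> t}\<close>.\<close>

definition cm_data :: "real measure \<Rightarrow> (real \<Rightarrow> real measure) \<Rightarrow> bool" where
  "cm_data mu rho \<longleftrightarrow>
     sets mu = sets borel \<and>
     (\<forall>K. compact K \<longrightarrow> emeasure mu K < \<infinity>) \<and>
     (\<forall>a. sets (rho a) = sets (restrict_space borel {0::real..})) \<and>
     (\<forall>a K. compact K \<and> K \<subseteq> {0..} \<longrightarrow> emeasure (rho a) K < \<infinity>) \<and>
     (\<forall>a b A. a \<le> b \<and> A \<in> sets (rho a) \<longrightarrow> emeasure (rho a) A \<le> emeasure (rho b) A)"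

definition cm_double_kernel_with ::
    "(real \<Rightarrow> real \<Rightarrow> real) \<Rightarrow> real measure \<Rightarrow> (real \<Rightarrow> real measure) \<Rightarrow> bool" where
  "cm_double_kernel_with \<Gamma> mu rho \<longleftrightarrow>
     cm_data mu rho \<and>
     ((\<forall>t s. 0 \<le> s \<and> s < t \<longrightarrow>
         (\<integral>\<^sup>+ a. ennreal (exp (- measure (rho a) {s<..t})) \<partial>mu) < \<infinity> \<and>
         \<Gamma> t s = enn2real (\<integral>\<^sup>+ a. ennreal (exp (- measure (rho a) {s<..t})) \<partial>mu))
      \<or>
      (\<forall>t s. 0 \<le> s \<and> s < t \<longrightarrow>
         (\<integral>\<^sup>+ a. ennreal (exp (- measure (rho a) {s..<t})) \<partial>mu) < \<infinity> \<and>
         \<Gamma> t s = enn2real (\<integral>\<^sup>+ a. ennreal (exp (- measure (rho a) {s..<t})) \<partial>mu)))"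

definition preserves_nonnegativity :: "(real \<Rightarrow> real \<Rightarrow> real) \<Rightarrow> bool" where
  "preserves_nonnegativity \<Gamma> \<longleftrightarrow>
     (\<forall>T::real. T > 0 \<longrightarrow> (\<forall>K::nat. K \<ge> 1 \<longrightarrow>
       (\<forall>(x::nat \<Rightarrow> real) (tt::nat \<Rightarrow> real).
          (0 \<le> tt 1 \<and> (\<forall>k. 1 \<le> k \<and> k < K \<longrightarrow> tt k < tt (Suc k)) \<and> tt K < T \<and>
           (\<forall>k\<in>{1..K}. (\<Sum>k'=1..k. x k' * \<Gamma> (tt k) (tt k')) \<ge> 0))
          \<longrightarrow> (\<forall>t\<in>{0..T}. (\<Sum>k\<in>{k\<in>{1..K}. tt k \<le> t}. x k * \<Gamma> t (tt k)) \<ge> 0))))"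

end

(*
  For each alpha, E alpha s t = exp (- rho(alpha, I s t)), with I s t = (s,t] or [s,t),
  is multiplicative, E s t = E s u * E u t, and it is nonincreasing in alpha with values in [0,1].
  Hence sum_{j<=k} x_j Gamma(t, t_j) is the mu-integral of E(t_k, t) * h_k, where
  h_k = sum_{j<=k} x_j E(t_j, t_k) satisfies h_(k+1) = D_k * h_k + x_(k+1) with the
  nonincreasing weight D_k = E(t_k, t_(k+1)), and the hypothesis says int h_k >= 0.

  If the positive part of h is nonincreasing and int h >= 0, then int W h >= 0 for
  every nonincreasing weight W (Chebyshev: {h > 0} is a down-set, so W h >= c h with
  c = inf of W on {h > 0}). Finite sums of such h form a cone, and the cone is stable
  under h |-> D h + c as soon as int (D h + c) >= 0: multiply every summand by D and
  recentre it to mean zero (the mean is >= 0 by Chebyshev, so the positive part stays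
  nonincreasing); the collected means plus c form a constant whose sign is that of
  int (D h + c). By induction every h_k lies in the cone, and weighting by E(t_k, t)
  gives the claim.
*)
theory Submission
  imports Defs
begin

definition antitone_weight :: "'a::linorder measure \<Rightarrow> ('a \<Rightarrow> real) \<Rightarrow> bool" where
  "antitone_weight M W \<longleftrightarrow> W \<in> borel_measurable M \<and> (\<forall>\<alpha>. 0 \<le> W \<alpha> \<and> W \<alpha> \<le> 1) \<and> antimono W"

lemma antitone_weight_integrable_mult:
  assumes "antitone_weight M W" "integrable M h"
  shows "integrable M (\<lambda>\<alpha>. W \<alpha> * h \<alpha>)"
proof (rule Bochner_Integration.integrable_bound[OF assms(2)])
  show "(\<lambda>\<alpha>. W \<alpha> * h \<alpha>) \<in> borel_measurable M"
    using assms unfolding antitone_weight_def by (auto intro: borel_measurable_times)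
  show "AE \<alpha> in M. norm (W \<alpha> * h \<alpha>) \<le> norm (h \<alpha>)"
    using assms(1) unfolding antitone_weight_def by (auto simp: abs_mult mult_left_le_one_le)
qed

lemma antimono_max_zero_affine:
  fixes h D :: "'a::linorder \<Rightarrow> real"
  assumes h: "antimono (\<lambda>\<alpha>. max (h \<alpha>) 0)" and D: "antimono D" "\<And>\<alpha>. 0 \<le> D \<alpha>" and "c \<le> 0"
  shows "antimono (\<lambda>\<alpha>. max (D \<alpha> * h \<alpha> + c) 0)"
proof
  fix \<alpha> \<beta> :: 'a
  assume "\<alpha> \<le> \<beta>"
  show "max (D \<beta> * h \<beta> + c) 0 \<le> max (D \<alpha> * h \<alpha> + c) 0"
  proof (cases "0 < D \<beta> * h \<beta>")
    case True
    then have "0 < h \<beta>" using D(2)[of \<beta>] by (auto simp: zero_less_mult_iff)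
    then have "h \<beta> \<le> h \<alpha>" using antimonoD[OF h \<open>\<alpha> \<le> \<beta>\<close>] by simp
    then have "D \<beta> * h \<beta> \<le> D \<alpha> * h \<alpha>"
      using antimonoD[OF D(1) \<open>\<alpha> \<le> \<beta>\<close>] D(2) \<open>0 < h \<beta>\<close> by (intro mult_mono) auto
    then show ?thesis by simp
  qed (use \<open>c \<le> 0\<close> in auto)
qed

lemma chebyshev_weighted_integral_nonneg:
  fixes h :: "'a::linorder \<Rightarrow> real"
  assumes h: "integrable M h" "antimono (\<lambda>\<alpha>. max (h \<alpha>) 0)" "0 \<le> integral\<^sup>L M h"
    and W: "antitone_weight M W"
  shows "0 \<le> (\<integral>\<alpha>. W \<alpha> * h \<alpha> \<partial>M)"
proof -
  define c where "c = Inf (insert 1 (W ` {\<beta>. 0 < h \<beta>}))"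
  have W01: "0 \<le> W \<alpha>" "W \<alpha> \<le> 1" for \<alpha>
    using W unfolding antitone_weight_def by auto
  have bdd: "bdd_below (insert 1 (W ` {\<beta>. 0 < h \<beta>}))"
    by (rule bdd_belowI[of _ 0]) (use W01 in auto)
  have "0 \<le> c"
    unfolding c_def by (rule cInf_greatest) (use W01 in auto)
  have "c * h \<alpha> \<le> W \<alpha> * h \<alpha>" for \<alpha>
  proof (cases "0 < h \<alpha>")
    case True
    then have "c \<le> W \<alpha>" unfolding c_def by (intro cInf_lower bdd) auto
    then show ?thesis using True by (intro mult_right_mono) auto
  next
    case False
    have "W \<alpha> \<le> W \<beta>" if "0 < h \<beta>" for \<beta>
    proof -
      have "\<not> \<alpha> \<le> \<beta>" using antimonoD[OF h(2), of \<alpha> \<beta>] False that by auto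
      then have "\<beta> \<le> \<alpha>" by simp
      then show ?thesis using W unfolding antitone_weight_def by (auto dest: antimonoD)
    qed
    then have "W \<alpha> \<le> c"
      unfolding c_def by (intro cInf_greatest) (use W01 in auto)
    then show ?thesis using False by (intro mult_right_mono_neg) auto
  qed
  then have "(\<integral>\<alpha>. c * h \<alpha> \<partial>M) \<le> (\<integral>\<alpha>. W \<alpha> * h \<alpha> \<partial>M)"
    by (intro integral_mono integrable_mult_right antitone_weight_integrable_mult h(1) W)
  moreover have "0 \<le> (\<integral>\<alpha>. c * h \<alpha> \<partial>M)"
    using \<open>0 \<le> c\<close> h(3) by simp
  ultimately show ?thesis by linarith
qed

inductive chebyshev_cone :: "'a::linorder measure \<Rightarrow> ('a \<Rightarrow> real) \<Rightarrow> bool" for M where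
  zero: "chebyshev_cone M (\<lambda>_. 0)"
| add: "chebyshev_cone M f \<Longrightarrow> integrable M q \<Longrightarrow> antimono (\<lambda>\<alpha>. max (q \<alpha>) 0) \<Longrightarrow>
    0 \<le> integral\<^sup>L M q \<Longrightarrow> chebyshev_cone M (\<lambda>\<alpha>. f \<alpha> + q \<alpha>)"

lemma chebyshev_cone_integrable: "chebyshev_cone M h \<Longrightarrow> integrable M h"
  by (induction rule: chebyshev_cone.induct) auto

lemma chebyshev_cone_weighted_integral_nonneg:
  assumes "chebyshev_cone M h" "antitone_weight M W"
  shows "0 \<le> (\<integral>\<alpha>. W \<alpha> * h \<alpha> \<partial>M)"
  using assms(1)
proof (induction rule: chebyshev_cone.induct)
  case (add f q)
  have "(\<integral>\<alpha>. W \<alpha> * (f \<alpha> + q \<alpha>) \<partial>M) = (\<integral>\<alpha>. W \<alpha> * f \<alpha> \<partial>M) + (\<integral>\<alpha>. W \<alpha> * q \<alpha> \<partial>M)"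
    unfolding distrib_left
    by (intro Bochner_Integration.integral_add antitone_weight_integrable_mult assms(2) chebyshev_cone_integrable add)
  also have "0 \<le> \<dots>"
    using add.IH chebyshev_weighted_integral_nonneg[OF add.hyps(2-4) assms(2)] by linarith
  finally show ?case .
qed simp

lemma chebyshev_cone_mult_weight:
  assumes M: "finite_measure M" "0 < measure M (space M)"
    and h: "chebyshev_cone M h" and D: "antitone_weight M D"
  obtains g C where "chebyshev_cone M g" "integral\<^sup>L M g = 0"
    "(\<lambda>\<alpha>. D \<alpha> * h \<alpha>) = (\<lambda>\<alpha>. g \<alpha> + C)"
proof -
  let ?m = "measure M (space M)"
  have int_const: "integrable M (\<lambda>_. a)" for a :: real
    using finite_measure.integrable_const[OF M(1)] .
  from h have "\<exists>g C. chebyshev_cone M g \<and> integral\<^sup>L M g = 0 \<and> (\<lambda>\<alpha>. D \<alpha> * h \<alpha>) = (\<lambda>\<alpha>. g \<alpha> + C)"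
  proof (induction rule: chebyshev_cone.induct)
    case zero
    show ?case by (intro exI[of _ "\<lambda>_. 0"] exI[of _ 0]) (auto intro: chebyshev_cone.zero)
  next
    case (add f q)
    obtain g C where g: "chebyshev_cone M g" "integral\<^sup>L M g = 0"
      and Df: "(\<lambda>\<alpha>. D \<alpha> * f \<alpha>) = (\<lambda>\<alpha>. g \<alpha> + C)"
      using add.IH by blast
    define b where "b = (\<integral>\<alpha>. D \<alpha> * q \<alpha> \<partial>M) / ?m"
    define q' where "q' \<alpha> = D \<alpha> * q \<alpha> - b" for \<alpha>
    have Dq: "integrable M (\<lambda>\<alpha>. D \<alpha> * q \<alpha>)"
      using antitone_weight_integrable_mult[OF D add.hyps(2)] .
    have "0 \<le> b"
      unfolding b_def using chebyshev_weighted_integral_nonneg[OF add.hyps(2-4) D] M(2) by simp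
    then have "antimono (\<lambda>\<alpha>. max (q' \<alpha>) 0)"
      unfolding q'_def diff_conv_add_uminus using D add.hyps(3)
      by (intro antimono_max_zero_affine) (auto simp: antitone_weight_def)
    moreover have "integrable M q'"
      unfolding q'_def using Dq int_const by simp
    moreover have "integral\<^sup>L M q' = 0"
      unfolding q'_def b_def using Dq int_const M(2) by simp
    ultimately have "chebyshev_cone M (\<lambda>\<alpha>. g \<alpha> + q' \<alpha>)"
      by (intro chebyshev_cone.add g) auto
    moreover have "integral\<^sup>L M (\<lambda>\<alpha>. g \<alpha> + q' \<alpha>) = 0"
      using g \<open>integrable M q'\<close> \<open>integral\<^sup>L M q' = 0\<close> by (simp add: chebyshev_cone_integrable)
    moreover have "(\<lambda>\<alpha>. D \<alpha> * (f \<alpha> + q \<alpha>)) = (\<lambda>\<alpha>. (g \<alpha> + q' \<alpha>) + (C + b))"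
      using fun_cong[OF Df] unfolding q'_def by (auto simp: algebra_simps)
    ultimately show ?case by blast
  qed
  then show ?thesis using that by blast
qed

lemma chebyshev_cone_affine_step:
  assumes M: "finite_measure M" "0 < measure M (space M)"
    and h: "chebyshev_cone M h" and D: "antitone_weight M D"
    and nonneg: "0 \<le> (\<integral>\<alpha>. D \<alpha> * h \<alpha> + c \<partial>M)"
  shows "chebyshev_cone M (\<lambda>\<alpha>. D \<alpha> * h \<alpha> + c)"
proof -
  obtain g C where g: "chebyshev_cone M g" "integral\<^sup>L M g = 0"
    and Dh: "(\<lambda>\<alpha>. D \<alpha> * h \<alpha>) = (\<lambda>\<alpha>. g \<alpha> + C)"
    using chebyshev_cone_mult_weight[OF M h D] .
  have eq: "(\<lambda>\<alpha>. D \<alpha> * h \<alpha> + c) = (\<lambda>\<alpha>. g \<alpha> + (C + c))"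
    using fun_cong[OF Dh] by auto
  have int_const: "integrable M (\<lambda>_. C + c)"
    using finite_measure.integrable_const[OF M(1)] .
  have "(\<integral>\<alpha>. D \<alpha> * h \<alpha> + c \<partial>M) = measure M (space M) * (C + c)"
    unfolding eq using g int_const by (simp add: chebyshev_cone_integrable)
  then have "0 \<le> integral\<^sup>L M (\<lambda>_. C + c)"
    using nonneg by simp
  then show ?thesis
    unfolding eq by (intro chebyshev_cone.add g(1) int_const) (auto intro: antimonoI)
qed

lemma chebyshev_cone_affine_recursion:
  assumes M: "finite_measure M" "0 < measure M (space M)"
    and h0: "h 0 = (\<lambda>_. 0)"
    and D: "\<And>k. k < n \<Longrightarrow> antitone_weight M (D k)"
    and step: "\<And>k. k < n \<Longrightarrow> h (Suc k) = (\<lambda>\<alpha>. D k \<alpha> * h k \<alpha> + c k)"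
    and nonneg: "\<And>k. k \<le> n \<Longrightarrow> 0 \<le> integral\<^sup>L M (h k)"
  shows "chebyshev_cone M (h n)"
  using D step nonneg
proof (induction n)
  case 0
  show ?case unfolding h0 by (rule chebyshev_cone.zero)
next
  case (Suc n)
  have "chebyshev_cone M (\<lambda>\<alpha>. D n \<alpha> * h n \<alpha> + c n)"
    using Suc.prems(3)[of "Suc n"] Suc.prems(2)[of n] Suc.IH Suc.prems
    by (intro chebyshev_cone_affine_step[OF M]) auto
  then show ?case using Suc.prems(2)[of n] by simp
qed

lemma increasing_steps_le:
  fixes tt :: "nat \<Rightarrow> 'a::order"
  assumes "\<And>k. 1 \<le> k \<Longrightarrow> k < K \<Longrightarrow> tt k < tt (Suc k)" "1 \<le> j" "j \<le> k" "k \<le> K"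
  shows "tt j \<le> tt k"
proof (rule lift_Suc_mono_le_ivl[where N = "{1..<K}"])
  show "tt i \<le> tt (Suc i)" if "i \<in> {1..<K}" for i
    using assms(1)[of i] that by simp
qed (use assms in auto)

lemma initial_segment_below:
  fixes tt :: "nat \<Rightarrow> 'a::order"
  assumes incr: "\<And>k. 1 \<le> k \<Longrightarrow> k < K \<Longrightarrow> tt k < tt (Suc k)"
  obtains k0 where "k0 \<le> K" "{k \<in> {1..K}. tt k \<le> t} = {1..k0}"
proof
  define S where "S = {k \<in> {1..K}. tt k \<le> t}"
  define k0 where "k0 = Max (insert 0 S)"
  have fin: "finite (insert 0 S)" unfolding S_def by simp
  show "k0 \<le> K"
    unfolding k0_def using fin by (subst Max_le_iff) (auto simp: S_def)
  have "{1..k0} \<subseteq> S"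
  proof
    fix k assume k: "k \<in> {1..k0}"
    then have "k0 \<in> S" using Max_in[OF fin] unfolding k0_def by auto
    then have "tt k \<le> tt k0" "tt k0 \<le> t" "k0 \<le> K"
      using k increasing_steps_le[where tt = tt and K = K, OF incr] unfolding S_def by auto
    then show "k \<in> S" using k unfolding S_def by auto
  qed
  moreover have "S \<subseteq> {1..k0}"
    unfolding k0_def using fin by (auto simp: S_def)
  ultimately show "{k \<in> {1..K}. tt k \<le> t} = {1..k0}"
    unfolding S_def by blast
qed

locale multiplicative_mixture = finite_measure M for M :: "real measure" +
  fixes E :: "real \<Rightarrow> real \<Rightarrow> real \<Rightarrow> real" and \<Gamma> :: "real \<Rightarrow> real \<Rightarrow> real"
  assumes space_pos: "0 < measure M (space M)"
    and E_diag: "0 \<le> s \<Longrightarrow> E \<alpha> s s = 1"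
    and E_mult: "0 \<le> s \<Longrightarrow> s \<le> u \<Longrightarrow> u \<le> t \<Longrightarrow> E \<alpha> s t = E \<alpha> s u * E \<alpha> u t"
    and E_weight: "0 \<le> s \<Longrightarrow> s \<le> t \<Longrightarrow> antitone_weight M (\<lambda>\<alpha>. E \<alpha> s t)"
    and kernel_eq: "0 \<le> s \<Longrightarrow> s \<le> t \<Longrightarrow> \<Gamma> t s = (\<integral>\<alpha>. E \<alpha> s t \<partial>M)"
begin

lemma sum_kernel_eq_integral:
  assumes "finite A" "\<And>j. j \<in> A \<Longrightarrow> 0 \<le> s j \<and> s j \<le> u"
  shows "(\<Sum>j\<in>A. x j * \<Gamma> u (s j)) = (\<integral>\<alpha>. (\<Sum>j\<in>A. x j * E \<alpha> (s j) u) \<partial>M)"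
proof -
  have "integrable M (\<lambda>\<alpha>. E \<alpha> (s j) u)" if "j \<in> A" for j
    using antitone_weight_integrable_mult[OF E_weight integrable_const, of "s j" u 1] assms(2)[OF that]
    by simp
  then have "(\<integral>\<alpha>. (\<Sum>j\<in>A. x j * E \<alpha> (s j) u) \<partial>M) = (\<Sum>j\<in>A. \<integral>\<alpha>. x j * E \<alpha> (s j) u \<partial>M)"
    by (intro Bochner_Integration.integral_sum integrable_mult_right)
  then show ?thesis
    using assms(2) by (simp add: kernel_eq)
qed

lemma partial_sums_chebyshev_cone:
  fixes tt x :: "nat \<Rightarrow> real"
  assumes tt1: "0 \<le> tt 1" and incr: "\<And>k. 1 \<le> k \<Longrightarrow> k < n \<Longrightarrow> tt k < tt (Suc k)"
    and nonneg: "\<And>k. 1 \<le> k \<Longrightarrow> k \<le> n \<Longrightarrow> 0 \<le> (\<Sum>j=1..k. x j * \<Gamma> (tt k) (tt j))"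
  shows "chebyshev_cone M (\<lambda>\<alpha>. \<Sum>j=1..n. x j * E \<alpha> (tt j) (tt n))"
proof -
  have mono: "tt j \<le> tt k" if "1 \<le> j" "j \<le> k" "k \<le> n" for j k
    using increasing_steps_le[where tt = tt and K = n] incr that by blast
  have tt_nonneg: "0 \<le> tt k" if "1 \<le> k" "k \<le> n" for k
    using tt1 mono[of 1 k] that by simp
  define h where "h k = (\<lambda>\<alpha>. \<Sum>j=1..k. x j * E \<alpha> (tt j) (tt k))" for k
  \<comment> \<open>\<open>tt 0\<close> is unconstrained; \<open>D 0\<close> only ever multiplies \<open>h 0 = 0\<close>, and \<open>max\<close> makes it the weight 1.\<close>
  define D where "D k = (\<lambda>\<alpha>. E \<alpha> (tt (max 1 k)) (tt (Suc k)))" for k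
  have "chebyshev_cone M (h n)"
  proof (rule chebyshev_cone_affine_recursion[OF finite_measure_axioms space_pos, where D = D and c = "\<lambda>k. x (Suc k)"])
    show "h 0 = (\<lambda>_. 0)" unfolding h_def by simp
    show "antitone_weight M (D k)" if "k < n" for k
      unfolding D_def using that tt_nonneg mono by (intro E_weight) auto
    show "h (Suc k) = (\<lambda>\<alpha>. D k \<alpha> * h k \<alpha> + x (Suc k))" if "k < n" for k
    proof
      fix \<alpha>
      have split: "E \<alpha> (tt j) (tt (Suc k)) = E \<alpha> (tt j) (tt k) * D k \<alpha>" if "j \<in> {1..k}" for j
        unfolding D_def using that \<open>k < n\<close> tt_nonneg mono by (auto simp: max_def intro!: E_mult)
      have "h (Suc k) \<alpha> = (\<Sum>j=1..k. x j * E \<alpha> (tt j) (tt (Suc k))) + x (Suc k)"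
        unfolding h_def using tt_nonneg[of "Suc k"] \<open>k < n\<close> by (simp add: E_diag)
      also have "(\<Sum>j=1..k. x j * E \<alpha> (tt j) (tt (Suc k))) = D k \<alpha> * h k \<alpha>"
        unfolding h_def sum_distrib_left by (rule sum.cong) (simp_all add: split)
      finally show "h (Suc k) \<alpha> = D k \<alpha> * h k \<alpha> + x (Suc k)" .
    qed
    show "0 \<le> integral\<^sup>L M (h k)" if "k \<le> n" for k
    proof (cases "k = 0")
      case False
      then have "integral\<^sup>L M (h k) = (\<Sum>j=1..k. x j * \<Gamma> (tt k) (tt j))"
        unfolding h_def using that tt_nonneg mono by (subst sum_kernel_eq_integral) auto
      then show ?thesis using nonneg[of k] that False by simp
    qed (simp add: h_def)
  qed
  then show ?thesis unfolding h_def .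
qed

theorem preserves_nonnegativity: "preserves_nonnegativity \<Gamma>"
  unfolding preserves_nonnegativity_def
proof (intro allI impI ballI)
  fix T :: real and K :: nat and x tt :: "nat \<Rightarrow> real" and t :: real
  assume "1 \<le> K" and hyps: "0 \<le> tt 1 \<and> (\<forall>k. 1 \<le> k \<and> k < K \<longrightarrow> tt k < tt (Suc k)) \<and> tt K < T \<and>
      (\<forall>k\<in>{1..K}. 0 \<le> (\<Sum>k'=1..k. x k' * \<Gamma> (tt k) (tt k')))"
  have incr: "\<And>k. 1 \<le> k \<Longrightarrow> k < K \<Longrightarrow> tt k < tt (Suc k)" using hyps by blast
  obtain k0 where "k0 \<le> K" and below: "{k \<in> {1..K}. tt k \<le> t} = {1..k0}"
    using initial_segment_below[where tt = tt and K = K, OF incr] .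
  show "0 \<le> (\<Sum>k\<in>{k \<in> {1..K}. tt k \<le> t}. x k * \<Gamma> t (tt k))"
  proof (cases "k0 = 0")
    case False
    have tt_bounds: "0 \<le> tt j \<and> tt j \<le> tt k0 \<and> tt j \<le> t" if "j \<in> {1..k0}" for j
    proof -
      have "tt 1 \<le> tt j" "tt j \<le> tt k0"
        using that \<open>k0 \<le> K\<close> increasing_steps_le[where tt = tt and K = K, OF incr] by auto
      moreover have "j \<in> {k \<in> {1..K}. tt k \<le> t}"
        using that below by blast
      ultimately show ?thesis using hyps by auto
    qed
    have "(\<Sum>k\<in>{k \<in> {1..K}. tt k \<le> t}. x k * \<Gamma> t (tt k)) =
        (\<integral>\<alpha>. (\<Sum>j=1..k0. x j * E \<alpha> (tt j) t) \<partial>M)"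
      unfolding below using tt_bounds by (intro sum_kernel_eq_integral) auto
    also have "\<dots> = (\<integral>\<alpha>. E \<alpha> (tt k0) t * (\<Sum>j=1..k0. x j * E \<alpha> (tt j) (tt k0)) \<partial>M)"
    proof (intro Bochner_Integration.integral_cong refl)
      fix \<alpha>
      have factor: "x j * E \<alpha> (tt j) t = E \<alpha> (tt k0) t * (x j * E \<alpha> (tt j) (tt k0))"
        if "j \<in> {1..k0}" for j
        using E_mult[of "tt j" "tt k0" t \<alpha>] tt_bounds[OF that] tt_bounds[of k0] False by simp
      show "(\<Sum>j=1..k0. x j * E \<alpha> (tt j) t) = E \<alpha> (tt k0) t * (\<Sum>j=1..k0. x j * E \<alpha> (tt j) (tt k0))"
        unfolding sum_distrib_left by (rule sum.cong[OF refl], rule factor)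
    qed
    also have "0 \<le> \<dots>"
    proof (rule chebyshev_cone_weighted_integral_nonneg)
      show "chebyshev_cone M (\<lambda>\<alpha>. \<Sum>j=1..k0. x j * E \<alpha> (tt j) (tt k0))"
        using hyps \<open>k0 \<le> K\<close> by (intro partial_sums_chebyshev_cone) auto
      show "antitone_weight M (\<lambda>\<alpha>. E \<alpha> (tt k0) t)"
        using tt_bounds[of k0] False by (intro E_weight) auto
    qed
    finally show ?thesis .
  qed (unfold below, simp)
qed

end

lemma antimono_borel_measurable:
  fixes f :: "real \<Rightarrow> real"
  assumes "antimono f"
  shows "f \<in> borel_measurable borel"
proof -
  have "mono (\<lambda>x. - f x)"
    using assms by (auto simp: mono_def dest: antimonoD)
  then have "(\<lambda>x. - (- f x)) \<in> borel_measurable borel"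
    by (intro borel_measurable_uminus borel_measurable_mono)
  then show ?thesis by simp
qed

definition interval_family :: "(real \<Rightarrow> real \<Rightarrow> real set) \<Rightarrow> bool" where
  "interval_family I \<longleftrightarrow>
     (\<forall>s t. I s t \<in> sets borel \<and> I s t \<subseteq> {s..t}) \<and> (\<forall>s. I s s = {}) \<and>
     (\<forall>s u t. s \<le> u \<and> u \<le> t \<longrightarrow> I s t = I s u \<union> I u t \<and> I s u \<inter> I u t = {})"

lemma interval_family_greaterThanAtMost: "interval_family (\<lambda>s t. {s<..t})"
  unfolding interval_family_def by auto

lemma interval_family_atLeastLessThan: "interval_family (\<lambda>s t. {s..<t})"
  unfolding interval_family_def by auto

lemma cm_data_interval_finite:
  assumes "cm_data mu rho" "interval_family I" "0 \<le> s"
  shows "I s t \<in> sets (rho a)" "emeasure (rho a) (I s t) < \<infinity>"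
proof -
  have sub: "I s t \<subseteq> {s..t}" and borel: "I s t \<in> sets borel"
    using assms(2) unfolding interval_family_def by auto
  have sets: "sets (rho a) = sets (restrict_space borel {0..})"
    using assms(1) unfolding cm_data_def by blast
  have in_rho: "A \<in> sets (rho a)" if "A \<in> sets borel" "A \<subseteq> {s..t}" for A
    unfolding sets using that assms(3) by (subst sets_restrict_space_iff) auto
  then show "I s t \<in> sets (rho a)"
    using sub borel by blast
  have "emeasure (rho a) (I s t) \<le> emeasure (rho a) {s..t}"
    using sub by (intro emeasure_mono in_rho) auto
  also have "\<dots> < \<infinity>"
    using assms(1,3) unfolding cm_data_def by auto
  finally show "emeasure (rho a) (I s t) < \<infinity>" .
qed

lemma cm_data_exp_measure_weight:
  assumes cm: "cm_data mu rho" and I: "interval_family I" and "0 \<le> s"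
  shows "antitone_weight mu (\<lambda>a. exp (- measure (rho a) (I s t)))"
proof -
  have rho_mono: "\<And>a b A. a \<le> b \<Longrightarrow> A \<in> sets (rho a) \<Longrightarrow> emeasure (rho a) A \<le> emeasure (rho b) A"
    using cm unfolding cm_data_def by blast
  have "measure (rho a) (I s t) \<le> measure (rho b) (I s t)" if "a \<le> b" for a b
  proof -
    have "emeasure (rho a) (I s t) \<le> emeasure (rho b) (I s t)"
      using rho_mono[OF that cm_data_interval_finite(1)[OF cm I \<open>0 \<le> s\<close>]] .
    then show ?thesis
      unfolding measure_def using cm_data_interval_finite(2)[OF cm I \<open>0 \<le> s\<close>, where a = b and t = t]
      by (intro enn2real_mono) auto
  qed
  then have anti: "antimono (\<lambda>a. exp (- measure (rho a) (I s t)))"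
    by (intro antimonoI) simp
  have sets_mu: "sets mu = sets borel"
    using cm unfolding cm_data_def by (rule conjunct1)
  have "(\<lambda>a. exp (- measure (rho a) (I s t))) \<in> borel_measurable mu"
    unfolding measurable_cong_sets[OF sets_mu refl] by (rule antimono_borel_measurable[OF anti])
  then show ?thesis
    unfolding antitone_weight_def using anti by (auto simp: measure_nonneg)
qed

lemma cm_data_multiplicative_mixture:
  assumes cm: "cm_data mu rho" and I: "interval_family I"
    and pos: "0 < emeasure mu UNIV" and fin: "emeasure mu UNIV < \<infinity>"
    and diag: "\<And>t. 0 \<le> t \<Longrightarrow> \<Gamma> t t = measure mu UNIV"
    and off_diag: "\<And>s t. 0 \<le> s \<Longrightarrow> s < t \<Longrightarrow>
      \<Gamma> t s = enn2real (\<integral>\<^sup>+ a. ennreal (exp (- measure (rho a) (I s t))) \<partial>mu)"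
  shows "multiplicative_mixture mu (\<lambda>a s t. exp (- measure (rho a) (I s t))) \<Gamma>"
proof -
  have "sets mu = sets borel"
    using cm unfolding cm_data_def by (rule conjunct1)
  then have space: "space mu = UNIV"
    by (metis sets_eq_imp_space_eq space_borel)
  interpret finite_measure mu
    using fin space by (intro finite_measureI) auto
  show ?thesis
  proof
    show "0 < measure mu (space mu)"
      using pos fin space by (simp add: measure_def enn2real_positive_iff)
    show "exp (- measure (rho a) (I s s)) = 1" for a s
      using I unfolding interval_family_def by simp
    show "exp (- measure (rho a) (I s t)) =
        exp (- measure (rho a) (I s u)) * exp (- measure (rho a) (I u t))"
      if "0 \<le> s" "s \<le> u" "u \<le> t" for a s u t
    proof -
      have "I s t = I s u \<union> I u t" "I s u \<inter> I u t = {}"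
        using I that unfolding interval_family_def by auto
      moreover have "0 \<le> u"
        using that by simp
      ultimately have "measure (rho a) (I s t) = measure (rho a) (I s u) + measure (rho a) (I u t)"
        using cm_data_interval_finite[OF cm I \<open>0 \<le> s\<close>, where a = a and t = u]
          cm_data_interval_finite[OF cm I \<open>0 \<le> u\<close>, where a = a and t = t]
        by (simp add: measure_Union less_top)
      then show ?thesis by (simp add: exp_add[symmetric])
    qed
    show "antitone_weight mu (\<lambda>a. exp (- measure (rho a) (I s t)))" if "0 \<le> s" "s \<le> t" for s t
      using cm_data_exp_measure_weight[OF cm I \<open>0 \<le> s\<close>] .
    show "\<Gamma> t s = (\<integral>a. exp (- measure (rho a) (I s t)) \<partial>mu)" if "0 \<le> s" "s \<le> t" for s t
    proof (cases "s = t")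
      case True
      then show ?thesis
        using diag that I space unfolding interval_family_def by simp
    next
      case False
      have "integrable mu (\<lambda>a. exp (- measure (rho a) (I s t)))"
        using cm_data_exp_measure_weight[OF cm I \<open>0 \<le> s\<close>, of t] unfolding antitone_weight_def
        by (intro integrable_const_bound[where B = 1]) auto
      then show ?thesis
        using off_diag[of s t] that False by (simp add: nn_integral_eq_integral)
    qed
  qed
qed

theorem mainTheorem4:
  fixes \<Gamma> :: "real \<Rightarrow> real \<Rightarrow> real" and mu :: "real measure" and rho :: "real \<Rightarrow> real measure"
  assumes "cm_double_kernel_with \<Gamma> mu rho"
    and "0 < emeasure mu UNIV" and "emeasure mu UNIV < \<infinity>"
    and "\<And>t. 0 \<le> t \<Longrightarrow> \<Gamma> t t = measure mu UNIV"
  shows "preserves_nonnegativity \<Gamma>"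
proof -
  have cm: "cm_data mu rho"
    using assms(1) unfolding cm_double_kernel_with_def by blast
  from assms(1) consider
      "\<And>s t. 0 \<le> s \<Longrightarrow> s < t \<Longrightarrow>
        \<Gamma> t s = enn2real (\<integral>\<^sup>+ a. ennreal (exp (- measure (rho a) {s<..t})) \<partial>mu)"
    | "\<And>s t. 0 \<le> s \<Longrightarrow> s < t \<Longrightarrow>
        \<Gamma> t s = enn2real (\<integral>\<^sup>+ a. ennreal (exp (- measure (rho a) {s..<t})) \<partial>mu)"
    unfolding cm_double_kernel_with_def by blast
  then show ?thesis
  proof cases
    case 1
    then have "multiplicative_mixture mu (\<lambda>a s t. exp (- measure (rho a) {s<..t})) \<Gamma>"
      by (intro cm_data_multiplicative_mixture[where \<Gamma> = \<Gamma>, OF cm interval_family_greaterThanAtMost assms(2-4)])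
    then show ?thesis
      by (rule multiplicative_mixture.preserves_nonnegativity)
  next
    case 2
    then have "multiplicative_mixture mu (\<lambda>a s t. exp (- measure (rho a) {s..<t})) \<Gamma>"
      by (intro cm_data_multiplicative_mixture[where \<Gamma> = \<Gamma>, OF cm interval_family_atLeastLessThan assms(2-4)])
    then show ?thesis
      by (rule multiplicative_mixture.preserves_nonnegativity)
  qed
qed

end
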